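(* Let $d\ge3$ be an integer, $p_1,\dots,p_d\in(0,1)$, and let $J^d$ be the first rencontre-time of $d$ independent Bernoulli sequences with these parameters (see context). For $0\le x<1$ let $\varphi_d(x)=\sum_{n=1}^\infty P(R^d_n)x^n$ and $\varphi_d(1-)=\lim_{x\to1-}\varphi_d(x)$. Then: in the case $d=3$, if $p_1=p_2=p_3$ then $\varphi_3(1-)=\infty$ and $P(J^3=\infty)=0$ (a rencontre happens almost surely); if $p_1,p_2,p_3$ are not all equal then $\varphi_3(1-)<\infty$ and $P(J^3=\infty)>0$. In the case $d\ge4$, $\varphi_d(1-)<\infty$ regardless of the values of $p_1,\dots,p_d$, and $P(J^d=\infty)>0$.
   Context: Let $d\ge2$ be an integer and $p_1,\dots,p_d\in(0,1)$. Let $\{X^j_k\}_{k\ge1}$, $j=1,\dots,d$, be independent sequences, the $j$-th consisting of i.i.d. Bernoulli random variables with success parameter $p_j$ (all $X^j_k$ mutually independent). Set $S^j(n)=\sum_{i=1}^n X^j_i$. For $n\ge1$, $R^d_n$ denotes the event $\{S^1(n)=S^2(n)=\dots=S^d(n)\}$ (a "rencontre at time $n$"), and $J^d=\inf\{n\ge1:R^d_n \text{ occurs}\}$ with $\inf\emptyset=\infty$. *)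

theory Defs
  imports "HOL-Probability.Probability"
begin

text \<open>X j k: the k-th Bernoulli variable (k \<ge> 1) of the j-th sequence (1 \<le> j \<le> d),
  a boolean random variable (True = success).\<close>

definition partial_sum :: "(nat \<Rightarrow> nat \<Rightarrow> 'a \<Rightarrow> bool) \<Rightarrow> nat \<Rightarrow> nat \<Rightarrow> 'a \<Rightarrow> nat" where
  "partial_sum X j n \<omega> = (\<Sum>i\<in>{1..n}. of_bool (X j i \<omega>))"

definition rencontre :: "'a measure \<Rightarrow> (nat \<Rightarrow> nat \<Rightarrow> 'a \<Rightarrow> bool) \<Rightarrow> nat \<Rightarrow> nat \<Rightarrow> 'a set" where
  "rencontre M X d n = {\<omega> \<in> space M. \<forall>j\<in>{1..d}. partial_sum X j n \<omega> = partial_sum X 1 n \<omega>}"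

definition no_rencontre :: "'a measure \<Rightarrow> (nat \<Rightarrow> nat \<Rightarrow> 'a \<Rightarrow> bool) \<Rightarrow> nat \<Rightarrow> 'a set" where
  "no_rencontre M X d = {\<omega> \<in> space M. \<forall>n\<ge>1. \<omega> \<notin> rencontre M X d n}"

definition phi :: "'a measure \<Rightarrow> (nat \<Rightarrow> nat \<Rightarrow> 'a \<Rightarrow> bool) \<Rightarrow> nat \<Rightarrow> real \<Rightarrow> real" where
  "phi M X d x = (\<Sum>n. measure M (rencontre M X d (Suc n)) * x ^ Suc n)"

end

theory Submission
  imports Defs
begin

text \<open>Write \<open>u n\<close> for the probability of a rencontre at time \<open>n\<close> and \<open>g L\<close> for the
probability of no rencontre at the times \<open>1, \<dots>, L\<close>. Splitting according to the last rencontre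
up to time \<open>N\<close>, after which the sequences start afresh and independently of the past, gives the
renewal equation \<open>\<Sum>m\<le>N. u m * g (N - m) = 1\<close>. Hence \<open>P(J = \<infinity>) = lim g\<close> is positive
exactly when \<open>\<Sum> u\<close> converges, which is also exactly when \<open>\<phi>\<^sub>d(1-)\<close> is finite.
By independence \<open>u n = \<Sum>c. \<Prod>j. b(n, p j, c)\<close> with binomial weights \<open>b\<close>. If two parameters
differ, exponential tilting gives \<open>\<Sum>c. b(n, a, c) b(n, b, c) \<le> \<rho>\<^sup>n\<close> with \<open>\<rho> < 1\<close>; if
\<open>d \<ge> 4\<close>, the local bound \<open>b(n, p, c) = O(1/\<surd>n)\<close> gives \<open>u n = O(n powr (-3/2))\<close>. If \<open>d = 3\<close>
and the parameters agree, \<open>u n = \<Sum>c. b(n, p, c)\<^sup>3 \<ge> 1 / (72 n)\<close> by Hoeffding's inequality and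
Jensen's inequality, so \<open>\<Sum> u\<close> diverges.\<close>

section \<open>Binomial probabilities\<close>

definition binom_prob :: "nat \<Rightarrow> real \<Rightarrow> nat \<Rightarrow> real" where
  "binom_prob n p k = real (n choose k) * p ^ k * (1 - p) ^ (n - k)"

lemma binom_prob_eq_pmf: "0 \<le> p \<Longrightarrow> p \<le> 1 \<Longrightarrow> binom_prob n p k = pmf (binomial_pmf n p) k"
  by (simp add: binom_prob_def)

lemma binom_prob_nonneg: "0 \<le> p \<Longrightarrow> p \<le> 1 \<Longrightarrow> 0 \<le> binom_prob n p k"
  by (simp add: binom_prob_def)

lemma binom_prob_eq_0: "n < k \<Longrightarrow> binom_prob n p k = 0"
  by (simp add: binom_prob_def)

lemma binom_prob_generating_function: "(\<Sum>k\<le>n. binom_prob n p k * z ^ k) = (p * z + (1 - p)) ^ n"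
  unfolding binom_prob_def binomial_ring by (intro sum.cong) (auto simp: power_mult_distrib mult_ac)

lemma sum_binom_prob: "(\<Sum>k\<le>n. binom_prob n p k) = 1"
  using binom_prob_generating_function[of n p 1] by simp

lemma sum_binom_prob_le_1:
  assumes "0 \<le> p" "p \<le> 1"
  shows "(\<Sum>k\<in>A. binom_prob n p k) \<le> 1"
proof (cases "finite A")
  case True
  have "(\<Sum>k\<in>A. binom_prob n p k) = (\<Sum>k\<in>A \<inter> {..n}. binom_prob n p k)"
    using True by (intro sum.mono_neutral_right) (auto simp: binom_prob_def binomial_eq_0_iff)
  also have "\<dots> \<le> (\<Sum>k\<le>n. binom_prob n p k)"
    using assms by (intro sum_mono2) (auto simp: binom_prob_nonneg)
  finally show ?thesis by (simp add: sum_binom_prob)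
qed simp

lemma binom_prob_le_1: "0 \<le> p \<Longrightarrow> p \<le> 1 \<Longrightarrow> binom_prob n p k \<le> 1"
  using sum_binom_prob_le_1[of p n "{k}"] by simp

lemma binom_prob_0: "binom_prob 0 p k = (if k = 0 then 1 else 0)"
  by (simp add: binom_prob_def)

lemma binom_prob_Suc_0: "binom_prob (Suc n) p 0 = binom_prob n p 0 * (1 - p)"
  by (simp add: binom_prob_def)

lemma binom_prob_Suc_Suc:
  "binom_prob (Suc n) p (Suc k) = binom_prob n p k * p + binom_prob n p (Suc k) * (1 - p)"
proof (cases k n rule: linorder_cases)
  case less
  then have "n - k = Suc (n - Suc k)" by simp
  then have q: "(1 - p) ^ (n - k) = (1 - p) ^ (n - Suc k) * (1 - p)"
    by (simp only: power_Suc2)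
  show ?thesis
    unfolding binom_prob_def binomial_Suc_Suc diff_Suc_Suc of_nat_add q by (simp add: algebra_simps)
next
  case equal
  then show ?thesis by (simp add: binom_prob_def)
next
  case greater
  then show ?thesis by (simp add: binom_prob_eq_0)
qed

lemma binom_prob_symmetric: "k \<le> n \<Longrightarrow> binom_prob n p k = binom_prob n (1 - p) (n - k)"
  unfolding binom_prob_def by (simp add: binomial_symmetric[symmetric] mult_ac)

lemma binom_prob_Suc_ratio:
  "binom_prob n p (Suc k) * (real k + 1) * (1 - p) = binom_prob n p k * (real n - real k) * p"
proof (cases "k < n")
  case True
  have "(n choose Suc k) * Suc k = (n choose k) * (n - k)"
    using binomial_absorption[of k n] binomial_absorb_comp[of n k] by (simp add: mult_ac)
  then have choose: "real (n choose Suc k) * (real k + 1) = real (n choose k) * (real n - real k)"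
    using True by (metis of_nat_Suc of_nat_diff of_nat_mult less_imp_le add.commute)
  from True have "n - k = Suc (n - Suc k)" by simp
  then have q: "(1 - p) ^ (n - k) = (1 - p) ^ (n - Suc k) * (1 - p)"
    by (simp only: power_Suc2)
  have "binom_prob n p (Suc k) * (real k + 1) * (1 - p)
      = (real (n choose Suc k) * (real k + 1)) * (p ^ k * p) * ((1 - p) ^ (n - Suc k) * (1 - p))"
    by (simp add: binom_prob_def mult_ac)
  also have "\<dots> = (real (n choose k) * (real n - real k)) * (p ^ k * p) * (1 - p) ^ (n - k)"
    by (simp only: choose q)
  also have "\<dots> = binom_prob n p k * (real n - real k) * p"
    by (simp add: binom_prob_def mult_ac)
  finally show ?thesis .
next
  case False
  then show ?thesis by (cases "k = n") (simp_all add: binom_prob_eq_0)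
qed

lemma binom_prob_Suc_lower:
  assumes p: "0 < p" "p < 1" and k: "real k \<le> real n * p"
    and t: "real (Suc t) \<le> real n * p * (1 - p)"
  shows "(1 - real (Suc t) / (real n * p * (1 - p))) * binom_prob n p (k + t)
           \<le> binom_prob n p (Suc (k + t))"
proof -
  define c where "c = k + t"
  define s where "s = real (Suc t)"
  define v where "v = real n * p * (1 - p)"
  have "0 < real (Suc t)" by simp
  then have "v > 0" using t unfolding v_def by linarith
  then have n: "real n > 0" using p unfolding v_def by (auto simp: zero_less_mult_iff)
  have f: "0 \<le> 1 - s / v" using t \<open>v > 0\<close> unfolding v_def s_def by simp
  have c1: "real c + 1 \<le> real n * p + s" and c2: "real n - real c \<ge> real n * (1 - p) - s + 1"
    using k unfolding c_def s_def by (simp_all add: algebra_simps)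
  have "(1 - s / v) * ((real c + 1) * (1 - p)) \<le> (1 - s / v) * ((real n * p + s) * (1 - p))"
    using f c1 p by (intro mult_left_mono mult_right_mono) auto
  also have "\<dots> = real n * p * (1 - p) + s * (1 - p) - s - s\<^sup>2 / (real n * p)"
    unfolding v_def using p n by (simp add: field_simps power2_eq_square)
  also have "\<dots> \<le> (real n * (1 - p) - s + 1) * p"
  proof -
    have "0 \<le> s\<^sup>2 / (real n * p)" using p n by simp
    then show ?thesis by (simp add: algebra_simps) (use p in linarith)
  qed
  also have "\<dots> \<le> (real n - real c) * p"
    using c2 p by (intro mult_right_mono) auto
  finally have key: "(1 - s / v) * ((real c + 1) * (1 - p)) \<le> (real n - real c) * p" .
  have "(1 - s / v) * binom_prob n p c * ((real c + 1) * (1 - p))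
        \<le> binom_prob n p c * ((real n - real c) * p)"
    using mult_left_mono[OF key binom_prob_nonneg[of p n c]] p by (simp add: mult_ac)
  also have "\<dots> = binom_prob n p (Suc c) * ((real c + 1) * (1 - p))"
    using binom_prob_Suc_ratio[of n p c] by (simp add: mult_ac)
  finally have "(1 - s / v) * binom_prob n p c * ((real c + 1) * (1 - p))
      \<le> binom_prob n p (Suc c) * ((real c + 1) * (1 - p))" .
  then have "(1 - s / v) * binom_prob n p c \<le> binom_prob n p (Suc c)"
    by (rule mult_right_le_imp_le) (use p in \<open>auto intro!: mult_pos_pos\<close>)
  then show ?thesis unfolding c_def s_def v_def .
qed

lemma binom_prob_add_lower:
  assumes p: "0 < p" "p < 1" and k: "real k \<le> real n * p"
  shows "real i \<le> real n * p * (1 - p) \<Longrightarrow>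
    (1 - real i * (real i + 1) / (2 * (real n * p * (1 - p)))) * binom_prob n p k \<le> binom_prob n p (k + i)"
proof (induction i)
  case (Suc i)
  define v where "v = real n * p * (1 - p)"
  have v: "v > 0" using Suc.prems unfolding v_def by linarith
  have IH: "(1 - real i * (real i + 1) / (2 * v)) * binom_prob n p k \<le> binom_prob n p (k + i)"
    using Suc by (simp add: v_def)
  have step: "(1 - real (Suc i) / v) * binom_prob n p (k + i) \<le> binom_prob n p (k + Suc i)"
    using binom_prob_Suc_lower[OF p k, of i] Suc.prems by (simp add: v_def)
  have f: "0 \<le> 1 - real (Suc i) / v" using Suc.prems v by (simp add: v_def)
  have "1 - real (Suc i) * (real (Suc i) + 1) / (2 * v)
      \<le> (1 - real (Suc i) / v) * (1 - real i * (real i + 1) / (2 * v))"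
    using v by (simp add: field_simps)
  then have "(1 - real (Suc i) * (real (Suc i) + 1) / (2 * v)) * binom_prob n p k
      \<le> (1 - real (Suc i) / v) * ((1 - real i * (real i + 1) / (2 * v)) * binom_prob n p k)"
    using p by (simp add: mult.assoc[symmetric] mult_right_mono binom_prob_nonneg)
  also have "\<dots> \<le> (1 - real (Suc i) / v) * binom_prob n p (k + i)"
    using IH f by (rule mult_left_mono)
  also have "\<dots> \<le> binom_prob n p (k + Suc i)" by (rule step)
  finally show ?case by (simp add: v_def)
qed simp

lemma binom_prob_le_below_mean:
  assumes p: "0 < p" "p < 1" and k: "real k \<le> real n * p"
    and m: "m \<ge> 1" "real m ^ 2 \<le> real n * p * (1 - p)"
  shows "binom_prob n p k \<le> 2 / real m"
proof -
  have "1 \<le> real m ^ 2" using m(1) by simp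
  then have v: "real n * p * (1 - p) > 0" using m(2) by linarith
  have half: "binom_prob n p k / 2 \<le> binom_prob n p (k + i)" if "i < m" for i
  proof -
    have ii: "real i * (real i + 1) \<le> real m ^ 2"
      using that by (simp add: power2_eq_square mult_mono)
    moreover have "real i \<le> real i * (real i + 1)" by (simp add: algebra_simps)
    ultimately have "real i \<le> real n * p * (1 - p)" using m(2) by linarith
    then have "(1 - real i * (real i + 1) / (2 * (real n * p * (1 - p)))) * binom_prob n p k
        \<le> binom_prob n p (k + i)"
      by (rule binom_prob_add_lower[OF p k])
    moreover have "real i * (real i + 1) / (2 * (real n * p * (1 - p))) \<le> 1 / 2"
      using ii m(2) v by (simp add: field_simps)
    moreover have "0 \<le> binom_prob n p k" using p by (simp add: binom_prob_nonneg)
    ultimately show ?thesis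
      using mult_right_mono[of "1 / 2" "1 - real i * (real i + 1) / (2 * (real n * p * (1 - p)))"
          "binom_prob n p k"] by linarith
  qed
  have "real m * (binom_prob n p k / 2) \<le> (\<Sum>i<m. binom_prob n p (k + i))"
    using sum_mono[of "{..<m}" "\<lambda>_. binom_prob n p k / 2" "\<lambda>i. binom_prob n p (k + i)"] half
    by simp
  also have "\<dots> = (\<Sum>c\<in>(+) k ` {..<m}. binom_prob n p c)"
    by (simp add: sum.reindex)
  also have "\<dots> \<le> 1" using p by (intro sum_binom_prob_le_1) auto
  finally show ?thesis using m by (simp add: field_simps)
qed

lemma binom_prob_le_sqrt:
  assumes p: "0 < p" "p < 1" and n: "n \<ge> 1"
  shows "binom_prob n p k \<le> 4 / sqrt (real n * p * (1 - p))"
proof -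
  define v where "v = real n * p * (1 - p)"
  have v: "v > 0" unfolding v_def using p n by simp
  have le: "binom_prob n p k \<le> 2 / real m" if m: "m \<ge> 1" "real m ^ 2 \<le> v" for m
  proof (cases "real k \<le> real n * p")
    case True
    then show ?thesis using binom_prob_le_below_mean[OF p True] m unfolding v_def by blast
  next
    case below: False
    show ?thesis
    proof (cases "k \<le> n")
      case True
      have "real (n - k) \<le> real n * (1 - p)" using below True by (simp add: algebra_simps)
      then have "binom_prob n (1 - p) (n - k) \<le> 2 / real m"
        using p m by (intro binom_prob_le_below_mean) (auto simp: v_def mult_ac)
      then show ?thesis using binom_prob_symmetric[OF True] by simp
    qed (simp add: binom_prob_eq_0)
  qed
  show ?thesis
  proof (cases "v \<ge> 4")
    case False
    then have "sqrt v \<le> 2" using real_sqrt_le_mono[of v 4] by simp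
    then have "1 \<le> 4 / sqrt v" using v by (simp add: field_simps)
    then show ?thesis using binom_prob_le_1[of p n k] p unfolding v_def by linarith
  next
    case True
    define m where "m = nat \<lfloor>sqrt v\<rfloor>"
    have "real m = of_int \<lfloor>sqrt v\<rfloor>" unfolding m_def using v by simp
    then have "real m \<le> sqrt v" "sqrt v < real m + 1" by linarith+
    moreover have "2 \<le> sqrt v" using True real_sqrt_le_mono[of 4 v] by simp
    ultimately have m: "m \<ge> 1" "real m ^ 2 \<le> v" "sqrt v \<le> 2 * real m"
      using v power_mono[of "real m" "sqrt v" 2] by auto
    then have "binom_prob n p k \<le> 2 / real m" by (intro le)
    also have "\<dots> \<le> 4 / sqrt v"
      using m v by (simp add: field_simps)
    finally show ?thesis unfolding v_def .
  qed
qed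

lemma sum_binom_prob_mult_le:
  assumes a: "0 \<le> a" "a \<le> 1" and b: "0 \<le> b" "b \<le> 1" and z: "z > 0"
  shows "(\<Sum>c\<le>n. binom_prob n a c * binom_prob n b c) \<le> ((a * z + (1 - a)) * (b / z + (1 - b))) ^ n"
proof -
  have "(\<Sum>c\<le>n. binom_prob n a c * binom_prob n b c)
      = (\<Sum>c\<le>n. (binom_prob n a c * z ^ c) * (binom_prob n b c * (1 / z) ^ c))"
    using z by (intro sum.cong) (auto simp: power_one_over field_simps)
  also have "\<dots> \<le> (\<Sum>c\<le>n. binom_prob n a c * z ^ c) * (\<Sum>c\<le>n. binom_prob n b c * (1 / z) ^ c)"
    unfolding sum_product using a b z
    by (intro sum_mono member_le_sum mult_left_mono) (auto simp: binom_prob_nonneg)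
  also have "\<dots> = ((a * z + (1 - a)) * (b / z + (1 - b))) ^ n"
    by (simp add: binom_prob_generating_function power_mult_distrib)
  finally show ?thesis .
qed

lemma sum_binom_prob_mult_exponential:
  assumes a: "0 < a" "a < 1" and b: "0 < b" "b < 1" and "a \<noteq> b"
  shows "\<exists>\<rho>. 0 \<le> \<rho> \<and> \<rho> < 1 \<and> (\<forall>n. (\<Sum>c\<le>n. binom_prob n a c * binom_prob n b c) \<le> \<rho> ^ n)"
proof -
  have less: "\<exists>\<rho>. 0 \<le> \<rho> \<and> \<rho> < 1 \<and> (\<forall>n. (\<Sum>c\<le>n. binom_prob n a c * binom_prob n b c) \<le> \<rho> ^ n)"
    if a: "0 < a" "a < 1" and b: "0 < b" "b < 1" and lt: "a < b" for a b :: real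
  proof -
    define r where "r = (1 - a) * b / (a * (1 - b))"
    define z where "z = (1 + r) / 2"
    define \<rho> where "\<rho> = (a * z + (1 - a)) * (b / z + (1 - b))"
    have "a * (1 - b) > 0" "(1 - a) * b > a * (1 - b)"
      using a b lt by (simp_all add: algebra_simps)
    then have "r > 1" unfolding r_def by simp
    then have z: "1 < z" "z < r" unfolding z_def by auto
    \<comment> \<open>\<open>\<rho> - 1\<close> is negative exactly for \<open>z\<close> strictly between \<open>1\<close> and \<open>r\<close>\<close>
    have "\<rho> - 1 = (z - 1) * (a * (1 - b) - (1 - a) * b / z)"
      unfolding \<rho>_def using z by (simp add: field_simps)
    moreover have "a * (1 - b) < (1 - a) * b / z"
      using z \<open>a * (1 - b) > 0\<close> unfolding r_def by (simp add: field_simps)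
    then have "(z - 1) * (a * (1 - b) - (1 - a) * b / z) < 0"
      using z by (intro mult_pos_neg) auto
    ultimately have "\<rho> < 1" by linarith
    moreover have "0 \<le> \<rho>" unfolding \<rho>_def using a b z by simp
    moreover have "\<forall>n. (\<Sum>c\<le>n. binom_prob n a c * binom_prob n b c) \<le> \<rho> ^ n"
      using sum_binom_prob_mult_le[of a b z] a b z unfolding \<rho>_def by auto
    ultimately show ?thesis by blast
  qed
  show ?thesis
  proof (cases "a < b")
    case False
    then have "b < a" using \<open>a \<noteq> b\<close> by simp
    then show ?thesis using less[OF b a] by (simp add: mult.commute)
  qed (use less a b in blast)
qed

lemma sum_cube_le_card:
  fixes f :: "'a \<Rightarrow> real"
  assumes W: "finite W" and f: "\<And>c. c \<in> W \<Longrightarrow> 0 \<le> f c"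
  shows "(\<Sum>c\<in>W. f c) ^ 3 \<le> real (card W) ^ 2 * (\<Sum>c\<in>W. f c ^ 3)"
proof (cases "W = {}")
  case False
  define w where "w = real (card W)"
  have w: "w > 0" using W False unfolding w_def by (simp add: card_gt_0_iff)
  have "(\<Sum>c\<in>W. (1 / w) *\<^sub>R f c) ^ 3 \<le> (\<Sum>c\<in>W. (1 / w) * f c ^ 3)"
    using W False f w by (intro convex_on_sum[OF _ _ convex_power_odd]) (auto simp: w_def)
  then have "((\<Sum>c\<in>W. f c) / w) ^ 3 \<le> (\<Sum>c\<in>W. f c ^ 3) / w"
    by (simp add: sum_distrib_left[symmetric] divide_inverse mult.commute)
  then show ?thesis
    using w unfolding w_def by (simp add: field_simps power3_eq_cube power2_eq_square)
qed simp

lemma card_nat_near_le: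
  fixes x e :: real
  assumes "0 \<le> e"
  shows "real (card {c :: nat \<in> A. \<bar>real c - x\<bar> < e}) \<le> 2 * e + 1"
proof -
  let ?W = "{c \<in> A. \<bar>real c - x\<bar> < e}"
  have "int ` ?W \<subseteq> {\<lceil>x - e\<rceil>..\<lfloor>x + e\<rfloor>}"
    by (auto simp: ceiling_le_iff le_floor_iff)
  then have "card (int ` ?W) \<le> card {\<lceil>x - e\<rceil>..\<lfloor>x + e\<rfloor>}"
    by (intro card_mono) auto
  then have "card ?W \<le> nat (\<lfloor>x + e\<rfloor> - \<lceil>x - e\<rceil> + 1)"
    by (simp add: card_image)
  moreover have "real_of_int \<lfloor>x + e\<rfloor> \<le> x + e" "x - e \<le> real_of_int \<lceil>x - e\<rceil>"
    by linarith+
  ultimately show ?thesis using assms by linarith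
qed

lemma binom_prob_mass_near_mean:
  assumes p: "0 < p" "p < 1" and n: "n \<ge> 1"
  shows "1 / 2 \<le> (\<Sum>c\<in>{c \<in> {..n}. \<bar>real c - real n * p\<bar> < sqrt (real n)}. binom_prob n p c)"
proof -
  interpret binomial_distribution n p using p by unfold_locales auto
  let ?B = "measure_pmf (binomial_pmf n p)"
  have "measure ?B {c. \<bar>real c - real n * p\<bar> \<ge> sqrt (real n)} \<le> 2 * exp (-2 * (sqrt (real n))\<^sup>2 / real n)"
    using n by (intro prob_abs_ge) auto
  also have "\<dots> = 2 / exp 2"
    using n by (simp add: exp_minus field_simps)
  also have "\<dots> \<le> 1 / 2"
    using exp_ge_add_one_self[of 1] power_mono[of 2 "exp (1::real)" 2]
    by (simp add: exp_of_nat_mult[symmetric] field_simps)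
  finally have "1 / 2 \<le> measure ?B {c. \<bar>real c - real n * p\<bar> < sqrt (real n)}"
    using measure_pmf.prob_compl[of "{c. \<bar>real c - real n * p\<bar> \<ge> sqrt (real n)}" "binomial_pmf n p"]
    by (simp add: Compl_eq_Diff_UNIV[symmetric] not_le Collect_neg_eq[symmetric])
  also have "\<dots> = measure ?B ({c. \<bar>real c - real n * p\<bar> < sqrt (real n)} \<inter> set_pmf (binomial_pmf n p))"
    by (simp add: measure_Int_set_pmf)
  also have "\<dots> \<le> measure ?B {c \<in> {..n}. \<bar>real c - real n * p\<bar> < sqrt (real n)}"
    using p by (intro measure_pmf.finite_measure_mono) (auto simp: set_pmf_binomial_eq)
  also have "\<dots> = (\<Sum>c\<in>{c \<in> {..n}. \<bar>real c - real n * p\<bar> < sqrt (real n)}. binom_prob n p c)"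
    using p by (simp add: measure_measure_pmf_finite binom_prob_eq_pmf)
  finally show ?thesis .
qed

lemma sum_binom_prob_cube_ge:
  assumes p: "0 < p" "p < 1" and n: "n \<ge> 1"
  shows "1 / (72 * real n) \<le> (\<Sum>c\<le>n. binom_prob n p c ^ 3)"
proof -
  define W where "W = {c \<in> {..n}. \<bar>real c - real n * p\<bar> < sqrt (real n)}"
  have "real (card W) \<le> 2 * sqrt (real n) + 1"
    unfolding W_def by (rule card_nat_near_le) simp
  moreover have "1 \<le> sqrt (real n)" using n by simp
  ultimately have card: "real (card W) \<le> 3 * sqrt (real n)" by linarith
  have "(1 / 2) ^ 3 \<le> (\<Sum>c\<in>W. binom_prob n p c) ^ 3"
    using binom_prob_mass_near_mean[OF p n] unfolding W_def by (intro power_mono) auto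
  also have "\<dots> \<le> real (card W) ^ 2 * (\<Sum>c\<in>W. binom_prob n p c ^ 3)"
    using p by (intro sum_cube_le_card) (auto simp: W_def binom_prob_nonneg)
  also have "\<dots> \<le> (3 * sqrt (real n)) ^ 2 * (\<Sum>c\<le>n. binom_prob n p c ^ 3)"
    using card p by (intro mult_mono power_mono sum_mono2 sum_nonneg) (auto simp: W_def binom_prob_nonneg)
  finally show ?thesis using n by (simp add: power_mult_distrib field_simps)
qed

section \<open>Power series at \<open>1\<close> and renewal sequences\<close>

lemma power_series_tendsto_at_left_1:
  fixes a :: "nat \<Rightarrow> real"
  assumes a: "\<And>n. 0 \<le> a n" and "summable a"
  shows "((\<lambda>x. \<Sum>n. a n * x ^ Suc n) \<longlongrightarrow> (\<Sum>n. a n)) (at_left 1)"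
proof -
  define f where "f = (\<lambda>x::real. \<Sum>n. a n * x ^ Suc n)"
  have ul: "uniform_limit {0..1} (\<lambda>N x. \<Sum>n<N. a n * x ^ Suc n) f sequentially"
    unfolding f_def
  proof (rule Weierstrass_m_test[OF _ \<open>summable a\<close>])
    fix n and x :: real
    assume "x \<in> {0..1}"
    then have "x ^ Suc n \<le> 1" "0 \<le> x ^ Suc n" by (simp_all add: power_le_one del: power_Suc)
    then show "norm (a n * x ^ Suc n) \<le> a n"
      using a[of n] by (simp only: real_norm_def abs_mult abs_of_nonneg) (rule mult_left_le)
  qed
  have "continuous_on {0..1} f"
    by (rule uniform_limit_theorem[OF _ ul]) (auto intro!: always_eventually continuous_intros)
  then have "(f \<longlongrightarrow> f 1) (at 1 within {0..1})"
    unfolding continuous_on_def by auto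
  then have "(f \<longlongrightarrow> f 1) (at_left 1)"
    by (simp add: at_within_Icc_at_left)
  then show ?thesis unfolding f_def by simp
qed

lemma power_series_filterlim_at_top_at_left_1:
  fixes a :: "nat \<Rightarrow> real"
  assumes a: "\<And>n. 0 \<le> a n" "\<And>n. a n \<le> 1" and "\<not> summable a"
  shows "filterlim (\<lambda>x. \<Sum>n. a n * x ^ Suc n) at_top (at_left 1)"
  unfolding filterlim_at_top
proof
  fix Z :: real
  obtain N where N: "Z < (\<Sum>n<N. a n)"
    using summableI_nonneg_bounded[of a Z] a \<open>\<not> summable a\<close> by (meson not_le)
  have "((\<lambda>x. \<Sum>n<N. a n * x ^ Suc n) \<longlongrightarrow> (\<Sum>n<N. a n * 1 ^ Suc n)) (at_left 1)"
    by (intro tendsto_intros)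
  then have "eventually (\<lambda>x. Z < (\<Sum>n<N. a n * x ^ Suc n)) (at_left 1)"
    using N by (intro order_tendstoD) auto
  moreover have "eventually (\<lambda>x. x \<in> {0<..<1::real}) (at_left 1)"
    by (rule eventually_at_left_real) simp
  ultimately show "eventually (\<lambda>x. Z \<le> (\<Sum>n. a n * x ^ Suc n)) (at_left 1)"
  proof eventually_elim
    case (elim x)
    have "summable (\<lambda>n. a n * x ^ Suc n)"
    proof (rule summable_comparison_test')
      show "summable (\<lambda>n. x ^ Suc n)" using elim by (simp add: summable_geometric)
      show "norm (a n * x ^ Suc n) \<le> x ^ Suc n" for n
        using elim a[of n] by (simp add: abs_mult mult_left_le_one_le)
    qed
    then have "(\<Sum>n<N. a n * x ^ Suc n) \<le> (\<Sum>n. a n * x ^ Suc n)"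
      using elim a by (intro sum_le_suminf) auto
    then show ?case using elim by simp
  qed
qed

lemma renewal_summable_if_limit_pos:
  fixes u g :: "nat \<Rightarrow> real"
  assumes u: "\<And>m. 0 \<le> u m" and "decseq g"
    and renewal: "\<And>N. (\<Sum>m\<le>N. u m * g (N - m)) = 1"
    and lim: "g \<longlonglongrightarrow> G" and "0 < G"
  shows "summable u"
proof (rule summableI_nonneg_bounded[OF u])
  fix N
  show "(\<Sum>m<N. u m) \<le> 1 / G"
  proof (cases N)
    case (Suc N')
    have "G * (\<Sum>m\<le>N'. u m) \<le> (\<Sum>m\<le>N'. u m * g (N' - m))"
      unfolding sum_distrib_left using u decseq_ge[OF \<open>decseq g\<close> lim]
      by (intro sum_mono) (metis mult.commute mult_left_mono)
    then show ?thesis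
      using Suc \<open>0 < G\<close> renewal[of N'] by (simp add: lessThan_Suc_atMost field_simps)
  qed (use \<open>0 < G\<close> in simp)
qed

lemma renewal_gap_bound:
  fixes u g :: "nat \<Rightarrow> real"
  assumes u: "\<And>m. 0 \<le> u m" and g: "\<And>L. g L \<le> 1" "decseq g"
    and renewal: "\<And>N. (\<Sum>m\<le>N. u m * g (N - m)) = 1"
  shows "1 \<le> g K * (\<Sum>m\<le>N. u m) + (\<Sum>m = Suc N..N + K. u m)"
proof -
  have "1 = (\<Sum>m\<le>N. u m * g (N + K - m)) + (\<Sum>m = Suc N..N + K. u m * g (N + K - m))"
    using renewal[of "N + K"] by (simp add: sum_up_index_split)
  also have "(\<Sum>m\<le>N. u m * g (N + K - m)) \<le> g K * (\<Sum>m\<le>N. u m)"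
    unfolding sum_distrib_left
  proof (intro sum_mono)
    fix m assume "m \<in> {..N}"
    then have "g (N + K - m) \<le> g K" using g(2) by (simp add: decseq_def)
    then show "u m * g (N + K - m) \<le> g K * u m"
      using u[of m] by (metis mult.commute mult_left_mono)
  qed
  also have "(\<Sum>m = Suc N..N + K. u m * g (N + K - m)) \<le> (\<Sum>m = Suc N..N + K. u m)"
    using u g(1) by (intro sum_mono) (simp add: mult_left_le)
  finally show ?thesis by simp
qed

lemma renewal_limit_pos_if_summable:
  fixes u g :: "nat \<Rightarrow> real"
  assumes u: "\<And>m. 0 \<le> u m" and g: "\<And>L. 0 \<le> g L" "\<And>L. g L \<le> 1" "decseq g"
    and renewal: "\<And>N. (\<Sum>m\<le>N. u m * g (N - m)) = 1"
    and lim: "g \<longlonglongrightarrow> G" and "summable u"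
  shows "0 < G"
proof -
  define S where "S = (\<Sum>m. u m)"
  have partial: "(\<lambda>N. \<Sum>m\<le>N. u m) \<longlonglongrightarrow> S"
    unfolding S_def using \<open>summable u\<close> by (rule summable_LIMSEQ')
  have bound: "1 \<le> g K * S" for K
  proof -
    have "1 \<le> g K * (\<Sum>m\<le>N. u m) + (S - (\<Sum>m\<le>N. u m))" for N
      using renewal_gap_bound[OF u g(2,3) renewal, of K N] u
        sum_le_suminf[OF \<open>summable u\<close>, of "{..N + K}"]
      by (simp add: S_def sum_up_index_split)
    moreover have "(\<lambda>N. g K * (\<Sum>m\<le>N. u m) + (S - (\<Sum>m\<le>N. u m))) \<longlonglongrightarrow> g K * S + (S - S)"
      by (intro tendsto_intros partial)
    ultimately show ?thesis by (intro LIMSEQ_le_const) auto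
  qed
  have "S > 0" using bound[of 0] g(1)[of 0] mult_nonneg_nonpos[of "g 0" S] by linarith
  have "1 / S \<le> G"
    using bound \<open>S > 0\<close> by (intro LIMSEQ_le_const[OF lim]) (auto simp: field_simps mult.commute)
  moreover have "0 < 1 / S" using \<open>S > 0\<close> by simp
  ultimately show "0 < G" by linarith
qed

section \<open>Events determined by finitely many coordinates\<close>

lemma measurable_restrict_countable:
  fixes Y :: "'i \<Rightarrow> 'a \<Rightarrow> 'b::countable"
  assumes "finite F" "\<And>i. i \<in> F \<Longrightarrow> Y i \<in> M \<rightarrow>\<^sub>M count_space UNIV"
  shows "(\<lambda>\<omega>. restrict (\<lambda>i. Y i \<omega>) F) \<in> M \<rightarrow>\<^sub>M count_space (F \<rightarrow>\<^sub>E UNIV)"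
  using measurable_restrict[of F Y M "\<lambda>_. count_space UNIV"] assms
  by (simp add: count_space_PiM_finite)

lemma sets_Collect_restrict_countable:
  fixes Y :: "'i \<Rightarrow> 'a \<Rightarrow> 'b::countable"
  assumes "finite F" "\<And>i. i \<in> F \<Longrightarrow> Y i \<in> M \<rightarrow>\<^sub>M count_space UNIV"
  shows "{\<omega> \<in> space M. P (restrict (\<lambda>i. Y i \<omega>) F)} \<in> sets M"
proof -
  have "(\<lambda>\<omega>. restrict (\<lambda>i. Y i \<omega>) F) \<in> M \<rightarrow>\<^sub>M count_space (F \<rightarrow>\<^sub>E UNIV)"
    using assms by (rule measurable_restrict_countable)
  then have "(\<lambda>\<omega>. restrict (\<lambda>i. Y i \<omega>) F) -` {v \<in> F \<rightarrow>\<^sub>E UNIV. P v} \<inter> space M \<in> sets M"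
    by (rule measurable_sets) auto
  also have "(\<lambda>\<omega>. restrict (\<lambda>i. Y i \<omega>) F) -` {v \<in> F \<rightarrow>\<^sub>E UNIV. P v} \<inter> space M
      = {\<omega> \<in> space M. P (restrict (\<lambda>i. Y i \<omega>) F)}"
    by auto
  finally show ?thesis .
qed

context prob_space
begin

lemma prob_restrict_indep:
  fixes Y :: "'i \<Rightarrow> 'a \<Rightarrow> 'b::countable"
  assumes indep: "indep_vars (\<lambda>_. count_space UNIV) Y I"
    and AB: "finite A" "finite B" "A \<subseteq> I" "B \<subseteq> I" "A \<inter> B = {}"
  shows "prob {\<omega> \<in> space M. P (restrict (\<lambda>i. Y i \<omega>) A) \<and> Q (restrict (\<lambda>i. Y i \<omega>) B)}
       = prob {\<omega> \<in> space M. P (restrict (\<lambda>i. Y i \<omega>) A)} * prob {\<omega> \<in> space M. Q (restrict (\<lambda>i. Y i \<omega>) B)}"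
proof -
  have "indep_var (count_space (A \<rightarrow>\<^sub>E UNIV)) (\<lambda>\<omega>. restrict (\<lambda>i. Y i \<omega>) A)
      (count_space (B \<rightarrow>\<^sub>E UNIV)) (\<lambda>\<omega>. restrict (\<lambda>i. Y i \<omega>) B)"
    using indep_var_restrict[OF indep AB(5,3,4)] AB(1,2) by (simp add: count_space_PiM_finite)
  then have "prob ((\<lambda>\<omega>. (restrict (\<lambda>i. Y i \<omega>) A, restrict (\<lambda>i. Y i \<omega>) B))
        -` ({v \<in> A \<rightarrow>\<^sub>E UNIV. P v} \<times> {v \<in> B \<rightarrow>\<^sub>E UNIV. Q v}) \<inter> space M)
      = prob ((\<lambda>\<omega>. restrict (\<lambda>i. Y i \<omega>) A) -` {v \<in> A \<rightarrow>\<^sub>E UNIV. P v} \<inter> space M)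
      * prob ((\<lambda>\<omega>. restrict (\<lambda>i. Y i \<omega>) B) -` {v \<in> B \<rightarrow>\<^sub>E UNIV. Q v} \<inter> space M)"
    by (rule indep_varD) auto
  then show ?thesis by (simp add: vimage_def Int_def conj_commute)
qed

lemma prob_restrict_eq:
  fixes Y Z :: "'i \<Rightarrow> 'a \<Rightarrow> 'b::countable"
  assumes F: "finite F"
    and Y: "\<And>i. i \<in> F \<Longrightarrow> Y i \<in> M \<rightarrow>\<^sub>M count_space UNIV"
    and Z: "\<And>i. i \<in> F \<Longrightarrow> Z i \<in> M \<rightarrow>\<^sub>M count_space UNIV"
    and cylinder: "\<And>v. prob {\<omega> \<in> space M. \<forall>i\<in>F. Y i \<omega> = v i} = prob {\<omega> \<in> space M. \<forall>i\<in>F. Z i \<omega> = v i}"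
  shows "prob {\<omega> \<in> space M. P (restrict (\<lambda>i. Y i \<omega>) F)} = prob {\<omega> \<in> space M. P (restrict (\<lambda>i. Z i \<omega>) F)}"
proof -
  let ?law = "\<lambda>Y. distr M (count_space (F \<rightarrow>\<^sub>E UNIV)) (\<lambda>\<omega>. restrict (\<lambda>i. Y i \<omega>) F)"
  have mY: "(\<lambda>\<omega>. restrict (\<lambda>i. Y i \<omega>) F) \<in> M \<rightarrow>\<^sub>M count_space (F \<rightarrow>\<^sub>E UNIV)"
    using F Y by (rule measurable_restrict_countable)
  have mZ: "(\<lambda>\<omega>. restrict (\<lambda>i. Z i \<omega>) F) \<in> M \<rightarrow>\<^sub>M count_space (F \<rightarrow>\<^sub>E UNIV)"
    using F Z by (rule measurable_restrict_countable)
  have "?law Y = ?law Z"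
  proof (rule measure_eqI_countable)
    show "countable (F \<rightarrow>\<^sub>E (UNIV :: 'b set))" using F by (simp add: countable_PiE)
    fix v :: "'i \<Rightarrow> 'b" assume v: "v \<in> F \<rightarrow>\<^sub>E UNIV"
    have "restrict f F = v \<longleftrightarrow> (\<forall>i\<in>F. f i = v i)" for f :: "'i \<Rightarrow> 'b"
      using v by (auto simp: PiE_iff extensional_def restrict_def fun_eq_iff)
    then have "(\<lambda>\<omega>. restrict (\<lambda>i. W i \<omega>) F) -` {v} \<inter> space M = {\<omega> \<in> space M. \<forall>i\<in>F. W i \<omega> = v i}"
      for W :: "'i \<Rightarrow> 'a \<Rightarrow> 'b" by auto
    then show "emeasure (?law Y) {v} = emeasure (?law Z) {v}"
      using cylinder[of v] v by (simp add: emeasure_distr[OF mY] emeasure_distr[OF mZ] emeasure_eq_measure)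
  qed simp_all
  then have "measure (?law Y) {v \<in> F \<rightarrow>\<^sub>E UNIV. P v} = measure (?law Z) {v \<in> F \<rightarrow>\<^sub>E UNIV. P v}"
    by simp
  moreover have "(\<lambda>\<omega>. restrict (\<lambda>i. W i \<omega>) F) -` {v \<in> F \<rightarrow>\<^sub>E UNIV. P v} \<inter> space M
      = {\<omega> \<in> space M. P (restrict (\<lambda>i. W i \<omega>) F)}" for W :: "'i \<Rightarrow> 'a \<Rightarrow> 'b"
    by auto
  ultimately show ?thesis by (simp add: measure_distr[OF mY] measure_distr[OF mZ])
qed

end

section \<open>Rencontres\<close>

definition restart :: "nat \<Rightarrow> (nat \<Rightarrow> nat \<Rightarrow> 'a \<Rightarrow> bool) \<Rightarrow> nat \<Rightarrow> nat \<Rightarrow> 'a \<Rightarrow> bool" where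
  "restart m Y j k = Y j (m + k)"

lemma restart_0 [simp]: "restart 0 Y = Y"
  by (simp add: restart_def fun_eq_iff)

lemma partial_sum_0 [simp]: "partial_sum Y j 0 \<omega> = 0"
  by (simp add: partial_sum_def)

lemma partial_sum_Suc: "partial_sum Y j (Suc n) \<omega> = partial_sum Y j n \<omega> + of_bool (Y j (Suc n) \<omega>)"
  by (simp add: partial_sum_def)

lemma partial_sum_le: "partial_sum Y j n \<omega> \<le> n"
proof -
  have "partial_sum Y j n \<omega> \<le> (\<Sum>i\<in>{1..n}. 1)"
    unfolding partial_sum_def by (rule sum_mono) simp
  then show ?thesis by simp
qed

lemma partial_sum_add: "partial_sum Y j (m + n) \<omega> = partial_sum Y j m \<omega> + partial_sum (restart m Y) j n \<omega>"
proof -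
  have "partial_sum Y j (m + n) \<omega> = partial_sum Y j m \<omega> + (\<Sum>i\<in>{m + 1..m + n}. of_bool (Y j i \<omega>))"
    unfolding partial_sum_def by (rule sum.ub_add_nat) simp
  also have "(\<Sum>i\<in>{m + 1..m + n}. of_bool (Y j i \<omega>)) = partial_sum (restart m Y) j n \<omega>"
    unfolding partial_sum_def restart_def
    by (rule sum.reindex_bij_witness[of _ "\<lambda>i. m + i" "\<lambda>i. i - m"]) auto
  finally show ?thesis .
qed

lemma rencontre_0 [simp]: "rencontre M Y d 0 = space M"
  by (simp add: rencontre_def)

lemma rencontre_add_iff:
  assumes "\<omega> \<in> rencontre M Y d m"
  shows "\<omega> \<in> rencontre M Y d (m + n) \<longleftrightarrow> \<omega> \<in> rencontre M (restart m Y) d n"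
proof -
  have "partial_sum Y j (m + n) \<omega> = partial_sum Y 1 (m + n) \<omega>
      \<longleftrightarrow> partial_sum (restart m Y) j n \<omega> = partial_sum (restart m Y) 1 n \<omega>" if "j \<in> {1..d}" for j
  proof -
    have "partial_sum Y j m \<omega> = partial_sum Y 1 m \<omega>"
      using assms that unfolding rencontre_def by blast
    then show ?thesis by (simp add: partial_sum_add)
  qed
  then show ?thesis
    using assms unfolding rencontre_def by simp
qed

text \<open>A valuation \<open>v\<close> assigns a value to each coordinate \<open>(j, k)\<close>, i.e. to sequence \<open>j\<close> at
time \<open>k\<close>; an event of the sequences is expressed as a predicate on the restriction of the
valuation \<open>\<lambda>(j, k). X j k \<omega>\<close> to a finite set of coordinates.\<close>

definition count_true :: "(nat \<times> nat \<Rightarrow> bool) \<Rightarrow> nat \<Rightarrow> nat \<Rightarrow> nat \<Rightarrow> nat" where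
  "count_true v m j n = (\<Sum>i\<in>{1..n}. of_bool (v (j, m + i)))"

definition equal_counts :: "nat \<Rightarrow> (nat \<times> nat \<Rightarrow> bool) \<Rightarrow> nat \<Rightarrow> nat \<Rightarrow> bool" where
  "equal_counts d v m n \<longleftrightarrow> (\<forall>j\<in>{1..d}. count_true v m j n = count_true v m 1 n)"

lemma count_true_restrict:
  assumes "{j} \<times> {m<..m + n} \<subseteq> F"
  shows "count_true (restrict (\<lambda>(j, k). Y j k \<omega>) F) m j n = partial_sum (restart m Y) j n \<omega>"
  unfolding count_true_def partial_sum_def restart_def using assms by (intro sum.cong) auto

lemma rencontre_restart_eq_restrict:
  assumes "{1..d} \<times> {m<..m + n} \<subseteq> F"
  shows "rencontre M (restart m Y) d n = {\<omega> \<in> space M. equal_counts d (restrict (\<lambda>(j, k). Y j k \<omega>) F) m n}"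
proof -
  have "count_true (restrict (\<lambda>(j, k). Y j k \<omega>) F) m j n = partial_sum (restart m Y) j n \<omega>"
    if "j \<in> {1..d}" for j \<omega>
    using that assms by (intro count_true_restrict) auto
  moreover have "j \<in> {1..d} \<Longrightarrow> 1 \<in> {1..d}" for j by simp
  ultimately show ?thesis
    unfolding rencontre_def equal_counts_def by (metis (no_types, lifting))
qed

definition no_rencontre_until :: "'a measure \<Rightarrow> (nat \<Rightarrow> nat \<Rightarrow> 'a \<Rightarrow> bool) \<Rightarrow> nat \<Rightarrow> nat \<Rightarrow> 'a set" where
  "no_rencontre_until M Y d L = {\<omega> \<in> space M. \<forall>n\<in>{1..L}. \<omega> \<notin> rencontre M Y d n}"

lemma no_rencontre_until_restart_eq_restrict:
  assumes "{1..d} \<times> {m<..m + L} \<subseteq> F"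
  shows "no_rencontre_until M (restart m Y) d L
    = {\<omega> \<in> space M. \<forall>n\<in>{1..L}. \<not> equal_counts d (restrict (\<lambda>(j, k). Y j k \<omega>) F) m n}"
proof -
  have "rencontre M (restart m Y) d n = {\<omega> \<in> space M. equal_counts d (restrict (\<lambda>(j, k). Y j k \<omega>) F) m n}"
    if "n \<in> {1..L}" for n
    using that assms by (intro rencontre_restart_eq_restrict) auto
  then show ?thesis unfolding no_rencontre_until_def by auto
qed

text \<open>Time \<open>0\<close> counts as a rencontre (\<open>rencontre M Y d 0 = space M\<close>), so every outcome has a
last rencontre.\<close>

definition last_rencontre :: "'a measure \<Rightarrow> (nat \<Rightarrow> nat \<Rightarrow> 'a \<Rightarrow> bool) \<Rightarrow> nat \<Rightarrow> nat \<Rightarrow> nat \<Rightarrow> 'a set" where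
  "last_rencontre M Y d N m = rencontre M Y d m \<inter> no_rencontre_until M (restart m Y) d (N - m)"

lemma disjoint_family_last_rencontre: "disjoint_family_on (last_rencontre M Y d N) {..N}"
proof -
  have not_both: "\<omega> \<notin> last_rencontre M Y d N m \<inter> last_rencontre M Y d N m'"
    if "m < m'" "m' \<le> N" for \<omega> m m'
  proof
    assume \<omega>: "\<omega> \<in> last_rencontre M Y d N m \<inter> last_rencontre M Y d N m'"
    then have "\<omega> \<in> rencontre M Y d (m + (m' - m))" "\<omega> \<in> rencontre M Y d m"
      using that by (auto simp: last_rencontre_def)
    then have "\<omega> \<in> rencontre M (restart m Y) d (m' - m)" by (simp add: rencontre_add_iff)
    moreover have "m' - m \<in> {1..N - m}" using that by auto
    ultimately show False using \<omega> by (auto simp: last_rencontre_def no_rencontre_until_def)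
  qed
  show ?thesis
    unfolding disjoint_family_on_def
  proof (intro ballI impI)
    fix m m' assume "m \<in> {..N}" "m' \<in> {..N}" "m \<noteq> m'"
    then consider "m < m'" "m' \<le> N" | "m' < m" "m \<le> N" by force
    then show "last_rencontre M Y d N m \<inter> last_rencontre M Y d N m' = {}"
      using not_both by cases blast+
  qed
qed

lemma UN_last_rencontre: "(\<Union>m\<le>N. last_rencontre M Y d N m) = space M"
proof (intro antisym subsetI)
  fix \<omega> assume \<omega>: "\<omega> \<in> space M"
  define m where "m = Max {n \<in> {..N}. \<omega> \<in> rencontre M Y d n}"
  have "0 \<in> {n \<in> {..N}. \<omega> \<in> rencontre M Y d n}" using \<omega> by simp
  then have "m \<in> {n \<in> {..N}. \<omega> \<in> rencontre M Y d n}"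
    unfolding m_def by (intro Max_in) auto
  then have m: "m \<le> N" "\<omega> \<in> rencontre M Y d m" by auto
  have "\<omega> \<notin> rencontre M (restart m Y) d n" if n: "n \<in> {1..N - m}" for n
  proof
    assume "\<omega> \<in> rencontre M (restart m Y) d n"
    then have "\<omega> \<in> rencontre M Y d (m + n)" using rencontre_add_iff[OF m(2)] by simp
    then have "m + n \<le> m" using n unfolding m_def by (intro Max_ge) auto
    then show False using n by simp
  qed
  then show "\<omega> \<in> (\<Union>m\<le>N. last_rencontre M Y d N m)"
    using m \<omega> by (auto simp: last_rencontre_def no_rencontre_until_def)
qed (auto simp: last_rencontre_def no_rencontre_until_def)

lemma prod_le_prod_subset_of_le_1:
  fixes f :: "'a \<Rightarrow> real"
  assumes "finite B" "A \<subseteq> B" "\<And>x. x \<in> B \<Longrightarrow> 0 \<le> f x \<and> f x \<le> 1"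
  shows "prod f B \<le> prod f A"
proof -
  have "prod f B = prod f (B - A) * prod f A"
    using assms by (intro prod.subset_diff) auto
  moreover have "0 \<le> prod f (B - A)" "prod f (B - A) \<le> 1" "0 \<le> prod f A"
    using assms by (auto intro!: prod_le_1 prod_nonneg)
  ultimately show ?thesis by (simp add: mult_left_le_one_le)
qed

section \<open>Independent Bernoulli sequences\<close>

locale bernoulli_rencontre = prob_space M for M :: "'a measure" +
  fixes X :: "nat \<Rightarrow> nat \<Rightarrow> 'a \<Rightarrow> bool" and p :: "nat \<Rightarrow> real" and d :: nat
  assumes d_pos: "1 \<le> d"
    and p_bounds: "\<And>j. j \<in> {1..d} \<Longrightarrow> 0 < p j \<and> p j < 1"
    and indep: "indep_vars (\<lambda>_. count_space UNIV) (\<lambda>(j, k). X j k) ({1..d} \<times> {1..})"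
    and prob_X: "\<And>j k. j \<in> {1..d} \<Longrightarrow> 1 \<le> k \<Longrightarrow> prob {\<omega> \<in> space M. X j k \<omega>} = p j"
begin

(* The independence assumption for the family in pointwise form, matching the restrictions
   restrict (\<lambda>(j, k). X j k \<omega>) F used below. *)
lemma indep_coords:
  "indep_vars (\<lambda>_. count_space UNIV) (\<lambda>i \<omega>. case i of (j, k) \<Rightarrow> X j k \<omega>) ({1..d} \<times> {1..})"
proof -
  have "(\<lambda>i \<omega>. case i of (j, k) \<Rightarrow> X j k \<omega>) = (\<lambda>(j, k). X j k)"
    by (auto simp: fun_eq_iff)
  then show ?thesis using indep by simp
qed

lemma measurable_X: "j \<in> {1..d} \<Longrightarrow> 1 \<le> k \<Longrightarrow> X j k \<in> M \<rightarrow>\<^sub>M count_space UNIV"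
  using indep unfolding indep_vars_def by auto

lemma sets_Collect_restrict_coords:
  assumes "finite F" "F \<subseteq> {1..d} \<times> {1..}"
  shows "{\<omega> \<in> space M. P (restrict (\<lambda>(j, k). X j k \<omega>) F)} \<in> events"
  using assms measurable_X by (intro sets_Collect_restrict_countable) auto

lemma sets_X_eq: "j \<in> {1..d} \<Longrightarrow> 1 \<le> k \<Longrightarrow> {\<omega> \<in> space M. X j k \<omega> = b} \<in> events"
  using measurable_sets[OF measurable_X, of j k "{b}"] by (simp add: vimage_def Int_def conj_commute)

lemma prob_X_eq:
  assumes "j \<in> {1..d}" "1 \<le> k"
  shows "prob {\<omega> \<in> space M. X j k \<omega> = b} = (if b then p j else 1 - p j)"
proof (cases b)
  case False
  have "{\<omega> \<in> space M. X j k \<omega> = False} = space M - {\<omega> \<in> space M. X j k \<omega>}" by auto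
  moreover have "{\<omega> \<in> space M. X j k \<omega>} \<in> events"
    using sets_X_eq[OF assms, of True] by simp
  ultimately show ?thesis using False prob_X[OF assms] by (simp add: prob_compl)
qed (simp add: prob_X[OF assms])

lemma prob_restart_cylinder:
  assumes F: "finite F" "F \<subseteq> {1..d} \<times> {1..}"
  shows "prob {\<omega> \<in> space M. \<forall>i\<in>F. (case i of (j, k) \<Rightarrow> restart m X j k \<omega>) = v i}
    = (\<Prod>(j, k)\<in>F. if v (j, k) then p j else 1 - p j)"
proof (cases "F = {}")
  case False
  let ?Y = "\<lambda>i \<omega>. case i of (j, k) \<Rightarrow> X j k \<omega>"
  define \<sigma> :: "nat \<times> nat \<Rightarrow> nat \<times> nat" where "\<sigma> = (\<lambda>(j, k). (j, m + k))"
  define A where "A = (\<lambda>(j, k). {v (j, k - m)})"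
  have inj: "inj_on \<sigma> F" by (auto simp: \<sigma>_def inj_on_def)
  have sub: "\<sigma> ` F \<subseteq> {1..d} \<times> {1..}" using F(2) by (auto simp: \<sigma>_def)
  have coord: "?Y (\<sigma> i) -` A (\<sigma> i) \<inter> space M
      = {\<omega> \<in> space M. (case i of (j, k) \<Rightarrow> restart m X j k \<omega>) = v i}" for i
    by (cases i) (simp add: \<sigma>_def A_def restart_def vimage_def Int_def conj_commute)
  have "(\<Inter>i\<in>\<sigma> ` F. ?Y i -` A i \<inter> space M)
      = (\<Inter>i\<in>F. {\<omega> \<in> space M. (case i of (j, k) \<Rightarrow> restart m X j k \<omega>) = v i})"
    by (simp add: image_image coord)
  also have "\<dots> = {\<omega> \<in> space M. \<forall>i\<in>F. (case i of (j, k) \<Rightarrow> restart m X j k \<omega>) = v i}"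
    using False by auto
  finally have "{\<omega> \<in> space M. \<forall>i\<in>F. (case i of (j, k) \<Rightarrow> restart m X j k \<omega>) = v i}
      = (\<Inter>i\<in>\<sigma> ` F. ?Y i -` A i \<inter> space M)" ..
  also have "prob \<dots> = (\<Prod>i\<in>\<sigma> ` F. prob (?Y i -` A i \<inter> space M))"
    by (rule indep_varsD[OF indep_coords]) (use F(1) False sub in auto)
  also have "\<dots> = (\<Prod>i\<in>F. prob {\<omega> \<in> space M. (case i of (j, k) \<Rightarrow> restart m X j k \<omega>) = v i})"
    by (simp add: prod.reindex[OF inj] coord)
  also have "\<dots> = (\<Prod>(j, k)\<in>F. if v (j, k) then p j else 1 - p j)"
    using F(2) by (intro prod.cong refl) (auto simp: restart_def prob_X_eq)
  finally show ?thesis .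
qed (simp add: prob_space)

lemma prob_restart_restrict:
  assumes F: "finite F" "F \<subseteq> {1..d} \<times> {1..}"
  shows "prob {\<omega> \<in> space M. P (restrict (\<lambda>(j, k). restart m X j k \<omega>) F)}
    = prob {\<omega> \<in> space M. P (restrict (\<lambda>(j, k). X j k \<omega>) F)}"
proof (rule prob_restrict_eq[OF F(1)])
  have restart_measurable:
    "(\<lambda>\<omega>. case i of (j, k) \<Rightarrow> restart m' X j k \<omega>) \<in> M \<rightarrow>\<^sub>M count_space UNIV"
    if "i \<in> F" for i m'
  proof -
    obtain j k where i: "i = (j, k)" by (cases i)
    then have "j \<in> {1..d}" "1 \<le> m' + k" using that F(2) by auto
    then show ?thesis using measurable_X[of j "m' + k"] by (simp add: i restart_def)
  qed
  show "(\<lambda>\<omega>. case i of (j, k) \<Rightarrow> restart m X j k \<omega>) \<in> M \<rightarrow>\<^sub>M count_space UNIV"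
    if "i \<in> F" for i
    using restart_measurable[OF that] .
  show "(\<lambda>\<omega>. case i of (j, k) \<Rightarrow> X j k \<omega>) \<in> M \<rightarrow>\<^sub>M count_space UNIV" if "i \<in> F" for i
    using restart_measurable[OF that, of 0] by simp
  show "prob {\<omega> \<in> space M. \<forall>i\<in>F. (case i of (j, k) \<Rightarrow> restart m X j k \<omega>) = v i}
      = prob {\<omega> \<in> space M. \<forall>i\<in>F. (case i of (j, k) \<Rightarrow> X j k \<omega>) = v i}" for v
    using prob_restart_cylinder[OF F, of m v] prob_restart_cylinder[OF F, of 0 v] by simp
qed

definition rencontre_prob :: "nat \<Rightarrow> real" where
  "rencontre_prob n = prob (rencontre M X d n)"

definition no_rencontre_until_prob :: "nat \<Rightarrow> real" where
  "no_rencontre_until_prob L = prob (no_rencontre_until M X d L)"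

lemma rencontre_prob_nonneg: "0 \<le> rencontre_prob n"
  by (simp add: rencontre_prob_def)

lemma rencontre_prob_le_1: "rencontre_prob n \<le> 1"
  by (simp add: rencontre_prob_def)

lemma rencontre_eq_restrict:
  "rencontre M X d n
    = {\<omega> \<in> space M. equal_counts d (restrict (\<lambda>(j, k). X j k \<omega>) ({1..d} \<times> {0<..n})) 0 n}"
  using rencontre_restart_eq_restrict[of d 0 n "{1..d} \<times> {0<..n}" M X] by simp

lemma sets_rencontre: "rencontre M X d n \<in> events"
  unfolding rencontre_eq_restrict by (rule sets_Collect_restrict_coords) auto

lemma sets_no_rencontre_until: "no_rencontre_until M (restart m X) d L \<in> events"
  unfolding no_rencontre_until_restart_eq_restrict[OF order_refl]
  by (rule sets_Collect_restrict_coords) auto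

lemma prob_no_rencontre_until_restart:
  "prob (no_rencontre_until M (restart m X) d L) = no_rencontre_until_prob L"
proof -
  let ?F = "{1..d} \<times> {0<..L}"
  have eq: "no_rencontre_until M (restart m' X) d L = {\<omega> \<in> space M. \<forall>n\<in>{1..L}.
      \<not> equal_counts d (restrict (\<lambda>(j, k). restart m' X j k \<omega>) ?F) 0 n}" for m'
    using no_rencontre_until_restart_eq_restrict[of d 0 L ?F M "restart m' X"] by simp
  have "prob {\<omega> \<in> space M. \<forall>n\<in>{1..L}. \<not> equal_counts d (restrict (\<lambda>(j, k). restart m X j k \<omega>) ?F) 0 n}
      = prob {\<omega> \<in> space M. \<forall>n\<in>{1..L}. \<not> equal_counts d (restrict (\<lambda>(j, k). X j k \<omega>) ?F) 0 n}"
    by (rule prob_restart_restrict) auto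
  then show ?thesis
    unfolding no_rencontre_until_prob_def eq[of m] eq[of 0, unfolded restart_0] .
qed

lemma prob_rencontre_Int_no_rencontre_until:
  "prob (rencontre M X d m \<inter> no_rencontre_until M (restart m X) d L) = rencontre_prob m * no_rencontre_until_prob L"
proof -
  let ?P = "\<lambda>v. equal_counts d v 0 m" and ?Q = "\<lambda>v. \<forall>n\<in>{1..L}. \<not> equal_counts d v m n"
  let ?A = "{1..d} \<times> {0<..m}" and ?B = "{1..d} \<times> {m<..m + L}"
  have split: "rencontre M X d m \<inter> no_rencontre_until M (restart m X) d L
      = {\<omega> \<in> space M. ?P (restrict (\<lambda>(j, k). X j k \<omega>) ?A) \<and> ?Q (restrict (\<lambda>(j, k). X j k \<omega>) ?B)}"
    unfolding rencontre_eq_restrict no_rencontre_until_restart_eq_restrict[OF order_refl] by auto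
  have indep: "prob {\<omega> \<in> space M. ?P (restrict (\<lambda>(j, k). X j k \<omega>) ?A) \<and> ?Q (restrict (\<lambda>(j, k). X j k \<omega>) ?B)}
      = prob {\<omega> \<in> space M. ?P (restrict (\<lambda>(j, k). X j k \<omega>) ?A)}
      * prob {\<omega> \<in> space M. ?Q (restrict (\<lambda>(j, k). X j k \<omega>) ?B)}"
    by (rule prob_restrict_indep[OF indep_coords]) auto
  have "prob {\<omega> \<in> space M. ?P (restrict (\<lambda>(j, k). X j k \<omega>) ?A)} = rencontre_prob m"
    unfolding rencontre_prob_def rencontre_eq_restrict ..
  moreover have "prob {\<omega> \<in> space M. ?Q (restrict (\<lambda>(j, k). X j k \<omega>) ?B)} = no_rencontre_until_prob L"
    using prob_no_rencontre_until_restart[of m L]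
    unfolding no_rencontre_until_restart_eq_restrict[OF order_refl] .
  ultimately show ?thesis unfolding split indep by simp
qed

lemma renewal_equation: "(\<Sum>m\<le>N. rencontre_prob m * no_rencontre_until_prob (N - m)) = 1"
proof -
  have "last_rencontre M X d N ` {..N} \<subseteq> events"
    using sets_rencontre sets_no_rencontre_until by (auto simp: last_rencontre_def)
  then have "prob (\<Union>m\<le>N. last_rencontre M X d N m) = (\<Sum>m\<le>N. prob (last_rencontre M X d N m))"
    by (intro finite_measure_finite_Union disjoint_family_last_rencontre) auto
  then have "1 = (\<Sum>m\<le>N. prob (last_rencontre M X d N m))"
    by (simp add: UN_last_rencontre prob_space)
  then show ?thesis
    by (simp add: last_rencontre_def prob_rencontre_Int_no_rencontre_until)
qed

lemma no_rencontre_until_prob_tendsto: "no_rencontre_until_prob \<longlonglongrightarrow> prob (no_rencontre M X d)"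
proof -
  have "(\<lambda>L. prob (no_rencontre_until M X d L)) \<longlonglongrightarrow> prob (\<Inter>L. no_rencontre_until M X d L)"
    using sets_no_rencontre_until[of 0]
    by (intro finite_Lim_measure_decseq) (auto simp: decseq_def no_rencontre_until_def)
  moreover have "(\<Inter>L. no_rencontre_until M X d L) = no_rencontre M X d"
    by (auto simp: no_rencontre_until_def no_rencontre_def) (use atLeastAtMost_iff in blast)
  ultimately show ?thesis unfolding no_rencontre_until_prob_def by simp
qed

lemma no_rencontre_pos_iff_summable: "0 < prob (no_rencontre M X d) \<longleftrightarrow> summable rencontre_prob"
proof -
  have "decseq no_rencontre_until_prob"
    unfolding decseq_def no_rencontre_until_prob_def using sets_no_rencontre_until[of 0]
    by (auto intro!: finite_measure_mono simp: no_rencontre_until_def)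
  moreover have "0 \<le> no_rencontre_until_prob L" "no_rencontre_until_prob L \<le> 1" for L
    by (simp_all add: no_rencontre_until_prob_def)
  ultimately show ?thesis
    using renewal_summable_if_limit_pos[OF rencontre_prob_nonneg _ renewal_equation no_rencontre_until_prob_tendsto]
      renewal_limit_pos_if_summable[OF rencontre_prob_nonneg _ _ _ renewal_equation no_rencontre_until_prob_tendsto]
    by blast
qed

lemma partial_sum_eq_count_true:
  assumes "j \<in> J"
  shows "partial_sum X j n \<omega> = count_true (restrict (\<lambda>(j, k). X j k \<omega>) (J \<times> {0<..n})) 0 j n"
proof -
  have "{j} \<times> {0<..0 + n} \<subseteq> J \<times> {0<..n}" using assms by auto
  from count_true_restrict[OF this, of X \<omega>] show ?thesis by simp
qed

lemma sets_partial_sums_eq: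
  assumes "J \<subseteq> {1..d}"
  shows "{\<omega> \<in> space M. \<forall>j\<in>J. partial_sum X j n \<omega> = c} \<in> events"
proof -
  have "{\<omega> \<in> space M. \<forall>j\<in>J. partial_sum X j n \<omega> = c}
      = {\<omega> \<in> space M. (\<lambda>v. \<forall>j\<in>J. count_true v 0 j n = c) (restrict (\<lambda>(j, k). X j k \<omega>) (J \<times> {0<..n}))}"
    by (auto simp: partial_sum_eq_count_true[of _ J])
  also have "\<dots> \<in> events"
    using assms finite_subset[OF assms finite_atLeastAtMost] by (intro sets_Collect_restrict_coords) auto
  finally show ?thesis .
qed

lemma prob_partial_sum_Int_X:
  assumes j: "j \<in> {1..d}"
  shows "prob ({\<omega> \<in> space M. partial_sum X j n \<omega> = c} \<inter> {\<omega> \<in> space M. X j (Suc n) \<omega> = b})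
    = prob {\<omega> \<in> space M. partial_sum X j n \<omega> = c} * (if b then p j else 1 - p j)"
proof -
  let ?P = "\<lambda>v. count_true v 0 j n = c" and ?Q = "\<lambda>v. v (j, Suc n) = b"
  let ?A = "{j} \<times> {0<..n}" and ?B = "{(j, Suc n)}"
  have "{\<omega> \<in> space M. partial_sum X j n \<omega> = c} \<inter> {\<omega> \<in> space M. X j (Suc n) \<omega> = b}
      = {\<omega> \<in> space M. ?P (restrict (\<lambda>(j, k). X j k \<omega>) ?A) \<and> ?Q (restrict (\<lambda>(j, k). X j k \<omega>) ?B)}"
    by (auto simp: partial_sum_eq_count_true[of j "{j}"])
  moreover have "prob {\<omega> \<in> space M. ?P (restrict (\<lambda>(j, k). X j k \<omega>) ?A) \<and> ?Q (restrict (\<lambda>(j, k). X j k \<omega>) ?B)}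
      = prob {\<omega> \<in> space M. ?P (restrict (\<lambda>(j, k). X j k \<omega>) ?A)}
      * prob {\<omega> \<in> space M. ?Q (restrict (\<lambda>(j, k). X j k \<omega>) ?B)}"
    using j by (intro prob_restrict_indep[OF indep_coords]) auto
  moreover have "{\<omega> \<in> space M. ?P (restrict (\<lambda>(j, k). X j k \<omega>) ?A)} = {\<omega> \<in> space M. partial_sum X j n \<omega> = c}"
    by (auto simp: partial_sum_eq_count_true[of j "{j}"])
  moreover have "{\<omega> \<in> space M. ?Q (restrict (\<lambda>(j, k). X j k \<omega>) ?B)} = {\<omega> \<in> space M. X j (Suc n) \<omega> = b}"
    by auto
  ultimately show ?thesis using prob_X_eq[OF j, of "Suc n" b] by simp
qed

lemma prob_partial_sum_eq:
  assumes j: "j \<in> {1..d}"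
  shows "prob {\<omega> \<in> space M. partial_sum X j n \<omega> = c} = binom_prob n (p j) c"
proof (induction n arbitrary: c)
  case 0
  then show ?case by (cases c) (simp_all add: binom_prob_0 prob_space)
next
  case (Suc n)
  let ?S = "\<lambda>c. {\<omega> \<in> space M. partial_sum X j n \<omega> = c}" and ?C = "\<lambda>b. {\<omega> \<in> space M. X j (Suc n) \<omega> = b}"
  have joint: "prob (?S c \<inter> ?C b) = binom_prob n (p j) c * (if b then p j else 1 - p j)" for c b
    using prob_partial_sum_Int_X[OF j] Suc.IH by simp
  have sets: "?S c \<inter> ?C b \<in> events" for c b
    using sets_partial_sums_eq[of "{j}" n c] sets_X_eq[OF j, of "Suc n" b] j by auto
  show ?case
  proof (cases c)
    case 0
    then have "{\<omega> \<in> space M. partial_sum X j (Suc n) \<omega> = c} = ?S 0 \<inter> ?C False"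
      by (auto simp: partial_sum_Suc)
    then show ?thesis using joint[of 0 False] 0 by (simp add: binom_prob_Suc_0)
  next
    case (Suc c')
    then have "{\<omega> \<in> space M. partial_sum X j (Suc n) \<omega> = c} = (?S c' \<inter> ?C True) \<union> (?S c \<inter> ?C False)"
      by (auto simp: partial_sum_Suc)
    moreover have "prob ((?S c' \<inter> ?C True) \<union> (?S c \<inter> ?C False))
        = prob (?S c' \<inter> ?C True) + prob (?S c \<inter> ?C False)"
      by (rule finite_measure_Union[OF sets sets]) auto
    ultimately show ?thesis
      using joint[of c' True] joint[of c False] Suc by (simp add: binom_prob_Suc_Suc)
  qed
qed

lemma prob_partial_sums_eq:
  assumes "J \<subseteq> {1..d}"
  shows "prob {\<omega> \<in> space M. \<forall>j\<in>J. partial_sum X j n \<omega> = c} = (\<Prod>j\<in>J. binom_prob n (p j) c)"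
  using finite_subset[OF assms finite_atLeastAtMost] assms
proof (induction J rule: finite_induct)
  case empty
  then show ?case by (simp add: prob_space)
next
  case (insert j J)
  let ?P = "\<lambda>v. count_true v 0 j n = c" and ?Q = "\<lambda>v. \<forall>j\<in>J. count_true v 0 j n = c"
  let ?A = "{j} \<times> {0<..n}" and ?B = "J \<times> {0<..n}"
  have "{\<omega> \<in> space M. \<forall>j\<in>insert j J. partial_sum X j n \<omega> = c}
      = {\<omega> \<in> space M. ?P (restrict (\<lambda>(j, k). X j k \<omega>) ?A) \<and> ?Q (restrict (\<lambda>(j, k). X j k \<omega>) ?B)}"
    by (auto simp: partial_sum_eq_count_true[of j "{j}"] partial_sum_eq_count_true[of _ J])
  moreover have "prob {\<omega> \<in> space M. ?P (restrict (\<lambda>(j, k). X j k \<omega>) ?A) \<and> ?Q (restrict (\<lambda>(j, k). X j k \<omega>) ?B)}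
      = prob {\<omega> \<in> space M. ?P (restrict (\<lambda>(j, k). X j k \<omega>) ?A)}
      * prob {\<omega> \<in> space M. ?Q (restrict (\<lambda>(j, k). X j k \<omega>) ?B)}"
    using insert by (intro prob_restrict_indep[OF indep_coords]) auto
  moreover have "{\<omega> \<in> space M. ?P (restrict (\<lambda>(j, k). X j k \<omega>) ?A)} = {\<omega> \<in> space M. partial_sum X j n \<omega> = c}"
    by (auto simp: partial_sum_eq_count_true[of j "{j}"])
  moreover have "{\<omega> \<in> space M. ?Q (restrict (\<lambda>(j, k). X j k \<omega>) ?B)} = {\<omega> \<in> space M. \<forall>j\<in>J. partial_sum X j n \<omega> = c}"
    by (auto simp: partial_sum_eq_count_true[of _ J])
  ultimately show ?case using insert prob_partial_sum_eq[of j n c] by simp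
qed

lemma rencontre_prob_eq_sum_prod: "rencontre_prob n = (\<Sum>c\<le>n. \<Prod>j\<in>{1..d}. binom_prob n (p j) c)"
proof -
  let ?E = "\<lambda>c. {\<omega> \<in> space M. \<forall>j\<in>{1..d}. partial_sum X j n \<omega> = c}"
  have one: "1 \<in> {1..d}" using d_pos by simp
  have "rencontre M X d n = (\<Union>c\<le>n. ?E c)"
    using one partial_sum_le[of X 1 n] unfolding rencontre_def by (auto simp: atMost_iff)
  moreover have "disjoint_family_on ?E {..n}"
    using one unfolding disjoint_family_on_def by auto
  then have "prob (\<Union>c\<le>n. ?E c) = (\<Sum>c\<le>n. prob (?E c))"
    using sets_partial_sums_eq[OF order_refl] by (intro finite_measure_finite_Union) auto
  ultimately show ?thesis
    unfolding rencontre_prob_def by (simp add: prob_partial_sums_eq)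
qed

lemma binom_prob_bounds: "j \<in> {1..d} \<Longrightarrow> 0 \<le> binom_prob n (p j) c \<and> binom_prob n (p j) c \<le> 1"
  using p_bounds[of j] by (simp add: binom_prob_nonneg binom_prob_le_1)

lemma rencontre_prob_le_sum_prod:
  assumes "J \<subseteq> {1..d}"
  shows "rencontre_prob n \<le> (\<Sum>c\<le>n. \<Prod>j\<in>J. binom_prob n (p j) c)"
  unfolding rencontre_prob_eq_sum_prod
  using assms binom_prob_bounds by (intro sum_mono prod_le_prod_subset_of_le_1) auto

lemma summable_rencontre_prob_if_unequal:
  assumes "a \<in> {1..d}" "b \<in> {1..d}" "p a \<noteq> p b"
  shows "summable rencontre_prob"
proof -
  obtain \<rho> where \<rho>: "0 \<le> \<rho>" "\<rho> < 1"
    "\<And>n. (\<Sum>c\<le>n. binom_prob n (p a) c * binom_prob n (p b) c) \<le> \<rho> ^ n"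
    using sum_binom_prob_mult_exponential[of "p a" "p b"] p_bounds assms by blast
  have "a \<noteq> b" using assms by auto
  then have "rencontre_prob n \<le> \<rho> ^ n" for n
    using rencontre_prob_le_sum_prod[of "{a, b}" n] \<rho>(3)[of n] assms by simp
  then show ?thesis
    using \<rho> by (intro summable_comparison_test[OF _ summable_geometric[of \<rho>]]) (auto simp: rencontre_prob_def)
qed

lemma summable_rencontre_prob_if_4_le:
  assumes "4 \<le> d"
  shows "summable rencontre_prob"
proof -
  define C where "C j = 4 / sqrt (p j * (1 - p j))" for j
  define K where "K = C 2 * C 3 * C 4"
  have C: "0 \<le> C j" "binom_prob n (p j) c \<le> C j / sqrt (real n)"
    if "j \<in> {1..d}" "1 \<le> n" for j n c
    using binom_prob_le_sqrt[of "p j" n c] p_bounds[OF that(1)] that(2)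
    by (auto simp: C_def real_sqrt_mult mult_ac)
  have "rencontre_prob n \<le> K * real n powr (-3/2)" if n: "1 \<le> n" for n
  proof -
    let ?s = "sqrt (real n)"
    have "rencontre_prob n \<le> (\<Sum>c\<le>n. binom_prob n (p 1) c * (binom_prob n (p 2) c
        * (binom_prob n (p 3) c * binom_prob n (p 4) c)))"
      using rencontre_prob_le_sum_prod[of "{1, 2, 3, 4}" n] assms by simp
    also have "\<dots> \<le> (\<Sum>c\<le>n. binom_prob n (p 1) c * (C 2 / ?s * (C 3 / ?s * (C 4 / ?s))))"
      using assms n C binom_prob_bounds
      by (intro sum_mono mult_left_mono mult_mono) (auto intro!: mult_nonneg_nonneg)
    also have "\<dots> = (\<Sum>c\<le>n. binom_prob n (p 1) c) * (C 2 / ?s * (C 3 / ?s * (C 4 / ?s)))"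
      by (rule sum_distrib_right[symmetric])
    also have "\<dots> = K / ?s ^ 3"
      by (simp add: sum_binom_prob K_def power3_eq_cube mult_ac)
    finally have "rencontre_prob n \<le> K / ?s ^ 3" .
    moreover have "(real n powr (1/2)) ^ 3 = real n powr (3/2)"
      using n by (simp add: powr_power)
    then have "?s ^ 3 = real n powr (3/2)" by (simp add: powr_half_sqrt)
    moreover have "real n powr (-3/2) = inverse (real n powr (3/2))"
      using powr_minus[of "real n" "3/2"] by (simp only: minus_divide_left)
    ultimately show ?thesis by (simp only: divide_inverse)
  qed
  then have "eventually (\<lambda>n. norm (rencontre_prob n) \<le> K * real n powr (-3/2)) sequentially"
    unfolding eventually_sequentially by (intro exI[of _ 1]) (auto simp: rencontre_prob_def)
  moreover have "summable (\<lambda>n. K * real n powr (-3/2))"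
    by (intro summable_mult) (simp add: summable_real_powr_iff)
  ultimately show ?thesis by (rule summable_comparison_test_ev)
qed

lemma not_summable_rencontre_prob_if_3_eq:
  assumes "d = 3" "p 1 = p 2" "p 2 = p 3"
  shows "\<not> summable rencontre_prob"
proof
  assume "summable rencontre_prob"
  have p: "0 < p 1" "p 1 < 1" using p_bounds[of 1] assms by auto
  have "1 / 72 * inverse (real n) \<le> rencontre_prob n" for n
  proof (cases "n = 0")
    case False
    have "rencontre_prob n = (\<Sum>c\<le>n. \<Prod>j\<in>{1..d}. binom_prob n (p j) c)"
      by (rule rencontre_prob_eq_sum_prod)
    also have "{1..d} = {1, 2, 3}" using assms by auto
    also have "(\<Sum>c\<le>n. \<Prod>j\<in>{1, 2, 3}. binom_prob n (p j) c) = (\<Sum>c\<le>n. binom_prob n (p 1) c ^ 3)"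
      using assms by (simp add: power3_eq_cube mult.assoc)
    finally show ?thesis
      using sum_binom_prob_cube_ge[OF p, of n] False by (simp add: field_simps)
  qed (simp add: rencontre_prob_def)
  then have "summable (\<lambda>n. 1 / 72 * inverse (real n))"
    by (intro summable_comparison_test[OF _ \<open>summable rencontre_prob\<close>]) auto
  then show False using not_summable_harmonic[where 'a = real] by simp
qed

lemma phi_eq: "phi M X d = (\<lambda>x. \<Sum>n. rencontre_prob (Suc n) * x ^ Suc n)"
  unfolding phi_def rencontre_prob_def by (rule refl)

lemma transient_if_summable:
  assumes "summable rencontre_prob"
  shows "(\<exists>L. (phi M X d \<longlongrightarrow> L) (at_left 1)) \<and> 0 < prob (no_rencontre M X d)"
proof
  have "summable (\<lambda>n. rencontre_prob (Suc n))" using assms by (simp add: summable_Suc_iff)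
  then have "(phi M X d \<longlongrightarrow> (\<Sum>n. rencontre_prob (Suc n))) (at_left 1)"
    unfolding phi_eq by (rule power_series_tendsto_at_left_1[OF rencontre_prob_nonneg])
  then show "\<exists>L. (phi M X d \<longlongrightarrow> L) (at_left 1)" ..
  show "0 < prob (no_rencontre M X d)" using assms by (simp add: no_rencontre_pos_iff_summable)
qed

lemma recurrent_if_not_summable:
  assumes "\<not> summable rencontre_prob"
  shows "filterlim (phi M X d) at_top (at_left 1) \<and> prob (no_rencontre M X d) = 0"
proof
  have "\<not> summable (\<lambda>n. rencontre_prob (Suc n))" using assms by (simp add: summable_Suc_iff)
  then show "filterlim (phi M X d) at_top (at_left 1)"
    unfolding phi_eq by (rule power_series_filterlim_at_top_at_left_1[OF rencontre_prob_nonneg rencontre_prob_le_1])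
  have "\<not> 0 < prob (no_rencontre M X d)" using assms by (simp add: no_rencontre_pos_iff_summable)
  then show "prob (no_rencontre M X d) = 0" using measure_nonneg[of M "no_rencontre M X d"] by linarith
qed

end

theorem theorem9:
  fixes M :: "'a measure" and X :: "nat \<Rightarrow> nat \<Rightarrow> 'a \<Rightarrow> bool"
    and p :: "nat \<Rightarrow> real" and d :: nat
  assumes "prob_space M"
    and "d \<ge> 3"
    and "\<forall>j\<in>{1..d}. 0 < p j \<and> p j < 1"
    and "prob_space.indep_vars M (\<lambda>_. count_space UNIV) (\<lambda>(j, k). X j k) ({1..d} \<times> {1..})"
    and "\<forall>j\<in>{1..d}. \<forall>k\<ge>1. measure M {\<omega> \<in> space M. X j k \<omega>} = p j"
  shows "(d = 3 \<longrightarrow>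
            ((p 1 = p 2 \<and> p 2 = p 3) \<longrightarrow>
               filterlim (phi M X d) at_top (at_left 1) \<and> measure M (no_rencontre M X d) = 0) \<and>
            (\<not> (p 1 = p 2 \<and> p 2 = p 3) \<longrightarrow>
               (\<exists>L. (phi M X d \<longlongrightarrow> L) (at_left 1)) \<and> measure M (no_rencontre M X d) > 0))
       \<and> (d \<ge> 4 \<longrightarrow>
            (\<exists>L. (phi M X d \<longlongrightarrow> L) (at_left 1)) \<and> measure M (no_rencontre M X d) > 0)"
proof -
  interpret bernoulli_rencontre M X p d
  proof (intro bernoulli_rencontre.intro bernoulli_rencontre_axioms.intro)
    show "prob_space M" by (fact assms(1))
    show "1 \<le> d" using assms(2) by simp
    show "0 < p j \<and> p j < 1" if "j \<in> {1..d}" for j using assms(3) that by blast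
    show "prob_space.indep_vars M (\<lambda>_. count_space UNIV) (\<lambda>(j, k). X j k) ({1..d} \<times> {1..})"
      by (fact assms(4))
    show "measure M {\<omega> \<in> space M. X j k \<omega>} = p j" if "j \<in> {1..d}" "1 \<le> k" for j k
      using assms(5) that by blast
  qed
  have "filterlim (phi M X d) at_top (at_left 1) \<and> prob (no_rencontre M X d) = 0"
    if "d = 3" "p 1 = p 2 \<and> p 2 = p 3"
    using that recurrent_if_not_summable not_summable_rencontre_prob_if_3_eq by blast
  moreover have "(\<exists>L. (phi M X d \<longlongrightarrow> L) (at_left 1)) \<and> prob (no_rencontre M X d) > 0"
    if d: "d = 3" and ne: "\<not> (p 1 = p 2 \<and> p 2 = p 3)"
  proof -
    have "1 \<in> {1..d}" "2 \<in> {1..d}" "3 \<in> {1..d}" using d by auto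
    with ne obtain a b where "a \<in> {1..d}" "b \<in> {1..d}" "p a \<noteq> p b" by blast
    then show ?thesis by (intro transient_if_summable summable_rencontre_prob_if_unequal)
  qed
  moreover have "(\<exists>L. (phi M X d \<longlongrightarrow> L) (at_left 1)) \<and> prob (no_rencontre M X d) > 0"
    if "4 \<le> d"
    using that transient_if_summable summable_rencontre_prob_if_4_le by blast
  ultimately show ?thesis by blast
qed

end
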